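(* Let $\varphi$ be a finite conjunction of literals of the two forms $x\in y$ and $x = y\setminus z$ (with $x,y,z$ set variables), and let $\mathrm{Vars}(\varphi)$ be its finite set of variables. Let $M$ be a set assignment over $\mathrm{Vars}(\varphi)$ satisfying $\varphi$; let $\bar x,\bar y\in\mathrm{Vars}(\varphi)$, let $\overline{M}$ be a set assignment over $\mathrm{Vars}(\varphi)$ satisfying $\varphi$ with $\overline{M}\bar x\neq \overline{M}\bar y$, and let $\mathfrak{t}$ be a set belonging to exactly one of $\overline{M}\bar x$, $\overline{M}\bar y$. Fix a set $\mathfrak{s}$ with $\mathrm{rk}(\mathfrak{s})>\mathrm{rk}(M)$. Define $\mathsf{V}_n\subseteq \mathrm{Vars}(\varphi)$ and set assignments $M_n$ over $\mathrm{Vars}(\varphi)$ as follows: $\mathsf{V}_0=\{u\in\mathrm{Vars}(\varphi)\mid \mathfrak{t}\in\overline{M}u\}$; $\mathsf{V}_n=\{u\in\mathrm{Vars}(\varphi)\mid Mu\cap\{Mw\mid w\in\mathsf{V}_{n-1}\}\neq\emptyset\}$ for $n\ge1$; $M_0v=Mv\cup\{\mathfrak{s}\}$ if $v\in\mathsf{V}_0$ and $M_0v=Mv$ otherwise; for $n\ge1$, $M_nv=M_{n-1}v\cup\{M_{n-1}u\mid u\in\mathsf{V}_{n-1},\ Mu\in Mv\}$ if $v\in\mathsf{V}_n$ and $M_nv=M_{n-1}v$ otherwise. Then: (a) for every $v\in\mathrm{Vars}(\varphi)$, $Mv\subseteq M_0v\subseteq M_1v\subseteq\cdots\subseteq M_nv\subseteq\cdots$;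 (b) for all $v\in\mathrm{Vars}(\varphi)$ and $n\in\mathbb{N}$, $M_nv\subseteq Mv\cup\{\mathfrak{s}\}\cup\bigcup_{k=0}^{n-1}\{M_ku\mid u\in\mathsf{V}_k,\ Mu\in Mv\}$.
   Context: A set assignment is a map from a finite set of set variables into the von Neumann universe $\mathcal{V}=\bigcup_\alpha\mathcal{V}_\alpha$, $\mathcal{V}_\alpha=\bigcup_{\beta<\alpha}\mathcal{P}(\mathcal{V}_\beta)$; it satisfies $x\in y$ iff $Mx\in My$ and $x=y\setminus z$ iff $Mx=My\setminus Mz$. The rank $\mathrm{rk}(s)$ of a set $s$ is the least ordinal $\alpha$ with $s\subseteq\mathcal{V}_\alpha$, and $\mathrm{rk}(M)=\max\{\mathrm{rk}(Mx)\mid x\in\mathrm{dom}(M)\}$. *)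

theory Defs
  imports Main
begin

text \<open>We model it abstractly:
  a type 'a of "sets" together with its membership interpretation elts :: 'a => 'a set,
  required to satisfy extensionality, foundation and the closure properties of ZF that
  are relevant (separation, finite sets, binary union, union, power set).
  The theorem is stated for every such universe (V itself is one).\<close>

definition set_universe :: "('a \<Rightarrow> 'a set) \<Rightarrow> bool" where
  "set_universe elts \<longleftrightarrow>
     inj elts \<and>
     wf {(y, x). y \<in> elts x} \<and>
     (\<forall>x A. A \<subseteq> elts x \<longrightarrow> A \<in> range elts) \<and>
     (\<forall>F. finite F \<longrightarrow> F \<in> range elts) \<and>
     (\<forall>x y. elts x \<union> elts y \<in> range elts) \<and>
     (\<forall>x. \<Union> (elts ` elts x) \<in> range elts) \<and>
     (\<forall>x. {z. elts z \<subseteq> elts x} \<in> range elts)"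

definition mk :: "('a \<Rightarrow> 'a set) \<Rightarrow> 'a set \<Rightarrow> 'a" where
  "mk elts A = inv elts A"

definition succ :: "('a \<Rightarrow> 'a set) \<Rightarrow> 'a \<Rightarrow> 'a" where
  "succ elts a = mk elts (elts a \<union> {a})"

text \<open>von Neumann rank, as an ordinal of the universe: rk(x) = sup { rk(y)+1 | y in x },
  which coincides with the least alpha such that x is a subset of V_alpha.\<close>
definition rank :: "('a \<Rightarrow> 'a set) \<Rightarrow> 'a \<Rightarrow> 'a" where
  "rank elts = wfrec {(y, x). y \<in> elts x}
     (\<lambda>r x. mk elts (\<Union>y\<in>elts x. elts (succ elts (r y))))"

text \<open>Ordinal comparison rk(a) < rk(b) is membership between von Neumann ordinals.\<close>
definition rank_less :: "('a \<Rightarrow> 'a set) \<Rightarrow> 'a \<Rightarrow> 'a \<Rightarrow> bool" where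
  "rank_less elts a b \<longleftrightarrow> rank elts a \<in> elts (rank elts b)"

datatype 'v lit = Mem 'v 'v | Diff 'v 'v 'v

fun lit_vars :: "'v lit \<Rightarrow> 'v set" where
  "lit_vars (Mem x y) = {x, y}"
| "lit_vars (Diff x y z) = {x, y, z}"

definition Vars :: "'v lit list \<Rightarrow> 'v set" where
  "Vars phi = (\<Union>l\<in>set phi. lit_vars l)"

fun holds_lit :: "('a \<Rightarrow> 'a set) \<Rightarrow> ('v \<Rightarrow> 'a) \<Rightarrow> 'v lit \<Rightarrow> bool" where
  "holds_lit elts M (Mem x y) \<longleftrightarrow> M x \<in> elts (M y)"
| "holds_lit elts M (Diff x y z) \<longleftrightarrow> M x = mk elts (elts (M y) - elts (M z))"

definition satisfies :: "('a \<Rightarrow> 'a set) \<Rightarrow> ('v \<Rightarrow> 'a) \<Rightarrow> 'v lit list \<Rightarrow> bool" where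
  "satisfies elts M phi \<longleftrightarrow> (\<forall>l\<in>set phi. holds_lit elts M l)"

text \<open>rk(M) < rk(s), where rk(M) is the max of the ranks of the values of M on Vars.\<close>
definition rank_assign_less :: "('a \<Rightarrow> 'a set) \<Rightarrow> 'v set \<Rightarrow> ('v \<Rightarrow> 'a) \<Rightarrow> 'a \<Rightarrow> bool" where
  "rank_assign_less elts Vs M s \<longleftrightarrow> (\<forall>v\<in>Vs. rank_less elts (M v) s)"

fun Vseq :: "('a \<Rightarrow> 'a set) \<Rightarrow> 'v set \<Rightarrow> ('v \<Rightarrow> 'a) \<Rightarrow> ('v \<Rightarrow> 'a) \<Rightarrow> 'a \<Rightarrow> nat \<Rightarrow> 'v set" where
  "Vseq elts Vs M Mbar t 0 = {u\<in>Vs. t \<in> elts (Mbar u)}"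
| "Vseq elts Vs M Mbar t (Suc n) =
     {u\<in>Vs. elts (M u) \<inter> M ` Vseq elts Vs M Mbar t n \<noteq> {}}"

fun Mseq :: "('a \<Rightarrow> 'a set) \<Rightarrow> 'v set \<Rightarrow> ('v \<Rightarrow> 'a) \<Rightarrow> ('v \<Rightarrow> 'a) \<Rightarrow> 'a \<Rightarrow> 'a
              \<Rightarrow> nat \<Rightarrow> 'v \<Rightarrow> 'a" where
  "Mseq elts Vs M Mbar t s 0 v =
     (if v \<in> Vseq elts Vs M Mbar t 0 then mk elts (elts (M v) \<union> {s}) else M v)"
| "Mseq elts Vs M Mbar t s (Suc n) v =
     (if v \<in> Vseq elts Vs M Mbar t (Suc n)
      then mk elts (elts (Mseq elts Vs M Mbar t s n v) \<union>
             {Mseq elts Vs M Mbar t s n u | u. u \<in> Vseq elts Vs M Mbar t n \<and> M u \<in> elts (M v)})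
      else Mseq elts Vs M Mbar t s n v)"

end

theory Submission
  imports Defs
begin

text \<open>Each stage adjoins to a set only finitely many new elements (values of an assignment on
  the finite set of variables), and a set universe is closed under such adjunctions, so mk
  yields exactly the intended set at every stage and both claims can be read off the recursion.\<close>

lemma elts_mk:
  assumes "A \<in> range elts"
  shows "elts (mk elts A) = A"
  using assms unfolding mk_def by (rule f_inv_into_f)

lemma elts_mk_union_finite:
  assumes U: "set_universe elts" and F: "finite F"
  shows "elts (mk elts (elts x \<union> F)) = elts x \<union> F"
proof -
  obtain y where "F = elts y"
    using U F unfolding set_universe_def by auto
  moreover have "elts x \<union> elts y \<in> range elts"
    using U unfolding set_universe_def by blast
  ultimately show ?thesis by (simp add: elts_mk)
qed

lemma finite_lit_vars: "finite (lit_vars l)"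
  by (cases l) auto

lemma finite_Vars: "finite (Vars phi)"
  unfolding Vars_def by (simp add: finite_lit_vars)

lemma Vseq_subset: "Vseq elts Vs M Mbar t n \<subseteq> Vs"
  by (cases n) auto

context
  fixes elts :: "'a \<Rightarrow> 'a set" and Vs :: "'v set" and M Mbar :: "'v \<Rightarrow> 'a" and t s :: 'a
  assumes U: "set_universe elts" and fin: "finite Vs"
begin

lemma elts_Mseq_0:
  "elts (Mseq elts Vs M Mbar t s 0 v) =
     (if v \<in> Vseq elts Vs M Mbar t 0 then elts (M v) \<union> {s} else elts (M v))"
  using elts_mk_union_finite[OF U, of "{s}" "M v"] by simp

lemma elts_Mseq_Suc:
  "elts (Mseq elts Vs M Mbar t s (Suc n) v) =
     (if v \<in> Vseq elts Vs M Mbar t (Suc n)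
      then elts (Mseq elts Vs M Mbar t s n v) \<union>
        {Mseq elts Vs M Mbar t s n u | u. u \<in> Vseq elts Vs M Mbar t n \<and> M u \<in> elts (M v)}
      else elts (Mseq elts Vs M Mbar t s n v))"
proof -
  have "{Mseq elts Vs M Mbar t s n u | u. u \<in> Vseq elts Vs M Mbar t n \<and> M u \<in> elts (M v)}
        \<subseteq> Mseq elts Vs M Mbar t s n ` Vs"
    using Vseq_subset[of elts Vs M Mbar t n] by auto
  then have "finite {Mseq elts Vs M Mbar t s n u | u.
                      u \<in> Vseq elts Vs M Mbar t n \<and> M u \<in> elts (M v)}"
    using fin finite_subset by blast
  from elts_mk_union_finite[OF U this] show ?thesis
    by simp
qed

lemma elts_subset_Mseq_0: "elts (M v) \<subseteq> elts (Mseq elts Vs M Mbar t s 0 v)"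
  unfolding elts_Mseq_0 by auto

lemma elts_Mseq_subset_Suc:
  "elts (Mseq elts Vs M Mbar t s n v) \<subseteq> elts (Mseq elts Vs M Mbar t s (Suc n) v)"
  unfolding elts_Mseq_Suc by simp

lemma elts_Mseq_subset_contributions:
  "elts (Mseq elts Vs M Mbar t s n v) \<subseteq> elts (M v) \<union> {s} \<union>
     (\<Union>k<n. {Mseq elts Vs M Mbar t s k u | u.
               u \<in> Vseq elts Vs M Mbar t k \<and> M u \<in> elts (M v)})"
proof (induction n)
  case 0
  show ?case unfolding elts_Mseq_0 by auto
next
  case (Suc n)
  have "elts (Mseq elts Vs M Mbar t s (Suc n) v) \<subseteq> elts (Mseq elts Vs M Mbar t s n v) \<union>
          {Mseq elts Vs M Mbar t s n u | u. u \<in> Vseq elts Vs M Mbar t n \<and> M u \<in> elts (M v)}"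
    unfolding elts_Mseq_Suc by simp
  with Suc.IH show ?case
    unfolding lessThan_Suc UN_insert by blast
qed

end

theorem lemma2:
  fixes elts :: "'a \<Rightarrow> 'a set"
    and phi :: "'v lit list"
    and M Mbar :: "'v \<Rightarrow> 'a"
    and xb yb :: 'v
    and t s :: 'a
  assumes U: "set_universe elts"
    and satM: "satisfies elts M phi"
    and xb: "xb \<in> Vars phi" and yb: "yb \<in> Vars phi"
    and satMbar: "satisfies elts Mbar phi"
    and neq: "Mbar xb \<noteq> Mbar yb"
    and t: "(t \<in> elts (Mbar xb)) \<noteq> (t \<in> elts (Mbar yb))"
    and rk: "rank_assign_less elts (Vars phi) M s"
  shows "(\<forall>v\<in>Vars phi.
           elts (M v) \<subseteq> elts (Mseq elts (Vars phi) M Mbar t s 0 v) \<and>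
           (\<forall>n. elts (Mseq elts (Vars phi) M Mbar t s n v)
                 \<subseteq> elts (Mseq elts (Vars phi) M Mbar t s (Suc n) v))) \<and>
         (\<forall>v\<in>Vars phi. \<forall>n.
           elts (Mseq elts (Vars phi) M Mbar t s n v) \<subseteq>
             elts (M v) \<union> {s} \<union>
             (\<Union>k<n. {Mseq elts (Vars phi) M Mbar t s k u | u.
                        u \<in> Vseq elts (Vars phi) M Mbar t k \<and> M u \<in> elts (M v)}))"
  by (intro conjI ballI allI elts_subset_Mseq_0[OF U finite_Vars]
      elts_Mseq_subset_Suc[OF U finite_Vars] elts_Mseq_subset_contributions[OF U finite_Vars])

end
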